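(* Let $\delta\in(0,1)$, $\epsilon>0$, $\gamma^*\ge0$, and consider the progressive sampling algorithm PS-REG+ (described in the context) run on a simulation-based game with these parameters. If PS-REG+ returns an empirical utility function $\hat u$, then with probability at least $1-\delta$ it holds that $E(u)\subseteq E_{2\epsilon}(\hat u)$ and $E_\gamma(\hat u)\subseteq E_{2\epsilon+\gamma}(u)$ for all $0\le\gamma\le\gamma^*$, where $u$ is the true utility function.
   Context: Games. A normal-form game has a finite set of players $P$, finite pure strategy sets $S_p$, pure profile space $\mathbf{S}=\prod_pS_p$ and utility $u:\mathbf{S}\to\mathbb{R}^{|P|}$. For a profile $s$ and player $p$, $A_{p,s}$ is the set of pure profiles obtained from $s$ by replacing $p$'s strategy by any $t\in S_p$. $\mathrm{Reg}_p(s;u)=\sup_{s'\in A_{p,s}}u_p(s')-u_p(s)$, $\mathrm{Reg}(s;u)=\max_p\mathrm{Reg}_p(s;u)$; $E_\gamma(u)=\{s\in\mathbf{S}:\mathrm{Reg}(s;u)\le\gamma\}$, $E(u)=E_0(u)$. Simulation-based game: a simulator which, queried at a pure profile $s$, returns an independent random utility vector with coordinates in $[a_s,b_s]$; $c=\sup_s(b_s-a_s)$; the true utility $u(s)$ is the expected simulator output. Index set $\mathcal{I}=P\times\mathbf{S}$. Progressive sampling algorithm: schedule $m_1,\dots,m_T$, $M_t=m_1+\dots+m_t$. All indices start active. At iteration $t$, for each active $(p,s)$, draw $m_t$ fresh samples of $p$'s utility at $s$, let $\hat u^{(t)}_p(s)$ be the mean of all $M_t$ samples, and compute a (non-uniform,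 index-specific) deviation bound $\hat\epsilon^{(t)}_p(s)$ with $|u_p(s)-\hat u^{(t)}_p(s)|\le\hat\epsilon^{(t)}_p(s)$ with probability at least $1-\delta/(|\mathcal{I}|T)$. Pruned indices are no longer sampled and retain their last values of $\hat u^{(t)}$ and $\hat\epsilon^{(t)}$. After pruning, if no index is active the algorithm returns $\hat u=\hat u^{(t)}$; if the schedule is exhausted with active indices it returns nothing. Define the regret lower bound $\mathrm{Reg}^\downarrow_p(s;\hat u^{(t)})=\sup_{s'\in A_{p,s}}\big(\hat u^{(t)}_p(s')-\hat\epsilon^{(t)}_p(s')\big)-\big(\hat u^{(t)}_p(s)+\hat\epsilon^{(t)}_p(s)\big)$. PS-REG+ prunes an active index $(p,s)$ at iteration $t$ if $\hat\epsilon^{(t)}_p(s)\le\epsilon$ (well-estimated pruning) or if $\mathrm{Reg}^\downarrow_p(s;\hat u^{(t)})>\max\{0,\ \gamma^*+\epsilon-\hat\epsilon^{(t)}_p(s)\}$ (regret pruning). *)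

theory Defs
  imports "HOL-Probability.Probability"
begin

text \<open>Normal-form games. Players form a finite type 'p; player p has strategy set S p.
  A utility function is u :: 'p => ('p => 's) => real, u p s = utility of player p at profile s.\<close>

definition profiles :: "('p::finite \<Rightarrow> 's set) \<Rightarrow> ('p \<Rightarrow> 's) set" where
  "profiles S = PiE UNIV S"

definition indices :: "('p::finite \<Rightarrow> 's set) \<Rightarrow> ('p \<times> ('p \<Rightarrow> 's)) set" where
  "indices S = UNIV \<times> profiles S"

definition dev :: "('p \<Rightarrow> 's set) \<Rightarrow> 'p \<Rightarrow> ('p \<Rightarrow> 's) \<Rightarrow> ('p \<Rightarrow> 's) set" where
  "dev S p s = (\<lambda>t. s(p := t)) ` S p"

definition reg_p :: "('p \<Rightarrow> 's set) \<Rightarrow> ('p \<Rightarrow> ('p \<Rightarrow> 's) \<Rightarrow> real) \<Rightarrow> 'p \<Rightarrow> ('p \<Rightarrow> 's) \<Rightarrow> real" where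
  "reg_p S u p s = Sup ((\<lambda>s'. u p s') ` dev S p s) - u p s"

definition reg :: "('p::finite \<Rightarrow> 's set) \<Rightarrow> ('p \<Rightarrow> ('p \<Rightarrow> 's) \<Rightarrow> real) \<Rightarrow> ('p \<Rightarrow> 's) \<Rightarrow> real" where
  "reg S u s = Max ((\<lambda>p. reg_p S u p s) ` UNIV)"

definition eqs :: "('p::finite \<Rightarrow> 's set) \<Rightarrow> real \<Rightarrow> ('p \<Rightarrow> ('p \<Rightarrow> 's) \<Rightarrow> real) \<Rightarrow> ('p \<Rightarrow> 's) set" where
  "eqs S \<gamma> u = {s \<in> profiles S. reg S u s \<le> \<gamma>}"

definition reg_lb :: "('p \<Rightarrow> 's set) \<Rightarrow> ('p \<Rightarrow> ('p \<Rightarrow> 's) \<Rightarrow> real) \<Rightarrow> ('p \<Rightarrow> ('p \<Rightarrow> 's) \<Rightarrow> real)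
    \<Rightarrow> 'p \<Rightarrow> ('p \<Rightarrow> 's) \<Rightarrow> real" where
  "reg_lb S uh eh p s = Sup ((\<lambda>s'. uh p s' - eh p s') ` dev S p s) - (uh p s + eh p s)"

text \<open>State of PS-REG+ after iteration t: (active indices, current estimates, current bounds).
  U t p s / Eb t p s are the estimate and deviation bound that would be computed at iteration t
  (from the first M_t samples of index (p,s)); they are only used for indices active at iteration t,
  pruned indices retain their last values.\<close>
primrec psreg_state ::
  "('p::finite \<Rightarrow> 's set) \<Rightarrow> real \<Rightarrow> real \<Rightarrow>
   (nat \<Rightarrow> 'p \<Rightarrow> ('p \<Rightarrow> 's) \<Rightarrow> real) \<Rightarrow> (nat \<Rightarrow> 'p \<Rightarrow> ('p \<Rightarrow> 's) \<Rightarrow> real) \<Rightarrow> nat \<Rightarrow>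
   ('p \<times> ('p \<Rightarrow> 's)) set \<times> ('p \<Rightarrow> ('p \<Rightarrow> 's) \<Rightarrow> real) \<times> ('p \<Rightarrow> ('p \<Rightarrow> 's) \<Rightarrow> real)" where
  "psreg_state S \<epsilon> gstar U Eb 0 = (indices S, \<lambda>p s. 0, \<lambda>p s. 0)"
| "psreg_state S \<epsilon> gstar U Eb (Suc t) =
     (let (A, uh, eh) = psreg_state S \<epsilon> gstar U Eb t;
          uh' = (\<lambda>p s. if (p, s) \<in> A then U (Suc t) p s else uh p s);
          eh' = (\<lambda>p s. if (p, s) \<in> A then Eb (Suc t) p s else eh p s);
          pruned = {(p, s) \<in> A. eh' p s \<le> \<epsilon> \<or>
                       reg_lb S uh' eh' p s > max 0 (gstar + \<epsilon> - eh' p s)}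
      in (A - pruned, uh', eh'))"

definition psreg_plus ::
  "('p::finite \<Rightarrow> 's set) \<Rightarrow> real \<Rightarrow> real \<Rightarrow> nat \<Rightarrow>
   (nat \<Rightarrow> 'p \<Rightarrow> ('p \<Rightarrow> 's) \<Rightarrow> real) \<Rightarrow> (nat \<Rightarrow> 'p \<Rightarrow> ('p \<Rightarrow> 's) \<Rightarrow> real) \<Rightarrow>
   ('p \<Rightarrow> ('p \<Rightarrow> 's) \<Rightarrow> real) option" where
  "psreg_plus S \<epsilon> gstar T U Eb =
     (if \<exists>t\<in>{1..T}. fst (psreg_state S \<epsilon> gstar U Eb t) = {}
      then Some (fst (snd (psreg_state S \<epsilon> gstar U Eb
                  (LEAST t. 1 \<le> t \<and> fst (psreg_state S \<epsilon> gstar U Eb t) = {}))))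
      else None)"

definition Msched :: "(nat \<Rightarrow> nat) \<Rightarrow> nat \<Rightarrow> nat" where
  "Msched m t = (\<Sum>j=1..t. m j)"

end

theory Submission
  imports Defs
begin

text \<open>With probability at least 1 - \<delta> (union bound over the T |I| deviation bounds) every
  bound computed during the run is valid. On that event every index leaves the active set soundly:
  either its bound is at most \<epsilon>, or it was pruned by regret, which certifies that its
  true utility is strictly below the best utility u* reachable by a unilateral deviation and that its
  estimate lies more than \<gamma>* + \<epsilon> below u*. Hence a true best response is estimated within \<epsilon>.
  An equilibrium of u is such a best response, while no deviation is estimated above u* + \<epsilon>; this
  gives estimated regret at most 2\<epsilon>. Conversely a \<gamma>-equilibrium of the estimates cannot have been
  pruned by regret, since the best response would beat its estimate by more than \<gamma>; so it is
  estimated within \<epsilon> too, and its true regret is at most 2\<epsilon> + \<gamma>.\<close>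

lemma dev_self: "s \<in> profiles S \<Longrightarrow> s \<in> dev S p s"
  unfolding dev_def profiles_def by (rule image_eqI[where x = "s p"]) (auto simp: PiE_iff)

lemma dev_subset_profiles: "s \<in> profiles S \<Longrightarrow> dev S p s \<subseteq> profiles S"
  unfolding dev_def profiles_def by (auto simp: PiE_iff)

lemma dev_dev: "s' \<in> dev S p s \<Longrightarrow> dev S p s' = dev S p s"
  unfolding dev_def by (auto simp: image_iff)

lemma finite_dev: "finite (S p) \<Longrightarrow> finite (dev S p s)"
  unfolding dev_def by simp

lemma dev_not_empty: "S p \<noteq> {} \<Longrightarrow> dev S p s \<noteq> {}"
  unfolding dev_def by simp

lemma reg_p_le_iff:
  assumes "finite (S p)" "S p \<noteq> {}"
  shows "reg_p S u p s \<le> g \<longleftrightarrow> (\<forall>s'\<in>dev S p s. u p s' - u p s \<le> g)"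
proof -
  have "reg_p S u p s \<le> g \<longleftrightarrow> Sup (u p ` dev S p s) \<le> g + u p s"
    unfolding reg_p_def by linarith
  also have "\<dots> \<longleftrightarrow> (\<forall>s'\<in>dev S p s. u p s' \<le> g + u p s)"
    using finite_dev[of S p s] dev_not_empty[of S p s] assms
    by (subst cSup_le_iff) (auto intro: bdd_above_finite)
  finally show ?thesis by (simp add: diff_le_eq)
qed

lemma mem_eqs_iff:
  fixes S :: "'p::finite \<Rightarrow> 's set"
  assumes "\<And>p. finite (S p)" "\<And>p. S p \<noteq> {}"
  shows "s \<in> eqs S g u \<longleftrightarrow> s \<in> profiles S \<and> (\<forall>p. \<forall>s'\<in>dev S p s. u p s' - u p s \<le> g)"
proof -
  have "reg_p S u p s \<le> g \<longleftrightarrow> (\<forall>s'\<in>dev S p s. u p s' - u p s \<le> g)" for p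
    by (rule reg_p_le_iff) (use assms in auto)
  then show ?thesis
    unfolding eqs_def reg_def by (subst Max_le_iff) auto
qed

definition best_dev_utility ::
    "('p \<Rightarrow> 's set) \<Rightarrow> ('p \<Rightarrow> ('p \<Rightarrow> 's) \<Rightarrow> real) \<Rightarrow> 'p \<Rightarrow> ('p \<Rightarrow> 's) \<Rightarrow> real" where
  "best_dev_utility S u p s = Max (u p ` dev S p s)"

lemma best_dev_utility_ge:
  "finite (S p) \<Longrightarrow> s' \<in> dev S p s \<Longrightarrow> u p s' \<le> best_dev_utility S u p s"
  unfolding best_dev_utility_def by (simp add: finite_dev)

lemma best_dev_utility_attained:
  "finite (S p) \<Longrightarrow> S p \<noteq> {} \<Longrightarrow> best_dev_utility S u p s \<in> u p ` dev S p s"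
  unfolding best_dev_utility_def by (intro Max_in) (simp_all add: finite_dev dev_not_empty)

lemma best_dev_utility_dev:
  "s' \<in> dev S p s \<Longrightarrow> best_dev_utility S u p s' = best_dev_utility S u p s"
  unfolding best_dev_utility_def by (simp add: dev_dev)

lemma reg_lb_le_best_dev_utility:
  assumes "finite (S p)" "S p \<noteq> {}"
    and valid: "\<And>s'. s' \<in> dev S p s \<Longrightarrow> \<bar>u p s' - uh p s'\<bar> \<le> eh p s'"
  shows "reg_lb S uh eh p s \<le> best_dev_utility S u p s - (uh p s + eh p s)"
proof -
  have "Sup ((\<lambda>s'. uh p s' - eh p s') ` dev S p s) \<le> best_dev_utility S u p s"
  proof (rule cSup_least)
    show "(\<lambda>s'. uh p s' - eh p s') ` dev S p s \<noteq> {}"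
      using dev_not_empty[of S p s, OF assms(2)] by simp
  next
    fix x assume "x \<in> (\<lambda>s'. uh p s' - eh p s') ` dev S p s"
    then obtain s' where s': "s' \<in> dev S p s" and x: "x = uh p s' - eh p s'"
      by blast
    have "x \<le> u p s'"
      using valid[OF s'] x by linarith
    also have "u p s' \<le> best_dev_utility S u p s"
      using assms(1) s' by (rule best_dev_utility_ge)
    finally show "x \<le> best_dev_utility S u p s" .
  qed
  then show ?thesis unfolding reg_lb_def by simp
qed

definition pruned_soundly ::
    "('p \<Rightarrow> 's set) \<Rightarrow> ('p \<Rightarrow> ('p \<Rightarrow> 's) \<Rightarrow> real) \<Rightarrow> real \<Rightarrow> real \<Rightarrow>
     ('p \<Rightarrow> ('p \<Rightarrow> 's) \<Rightarrow> real) \<Rightarrow> ('p \<Rightarrow> ('p \<Rightarrow> 's) \<Rightarrow> real) \<Rightarrow> 'p \<Rightarrow> ('p \<Rightarrow> 's) \<Rightarrow> bool" where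
  "pruned_soundly S u \<epsilon> g uh eh p s \<longleftrightarrow> \<bar>u p s - uh p s\<bar> \<le> eh p s \<and>
     (eh p s \<le> \<epsilon> \<or> u p s < best_dev_utility S u p s \<and> uh p s < best_dev_utility S u p s - g - \<epsilon>)"

lemma regret_pruning_sound:
  assumes "finite (S p)" "S p \<noteq> {}"
    and valid: "\<And>s'. s' \<in> dev S p s \<Longrightarrow> \<bar>u p s' - uh p s'\<bar> \<le> eh p s'"
    and "s \<in> profiles S"
    and pruned: "reg_lb S uh eh p s > max 0 (g + \<epsilon> - eh p s)"
  shows "u p s < best_dev_utility S u p s \<and> uh p s < best_dev_utility S u p s - g - \<epsilon>"
proof -
  have "reg_lb S uh eh p s \<le> best_dev_utility S u p s - (uh p s + eh p s)"
    by (rule reg_lb_le_best_dev_utility) (use assms in auto)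
  then show ?thesis
    using valid[OF dev_self[OF assms(4)]] pruned by auto
qed

lemma psreg_state_pruned_soundly:
  fixes S :: "'p::finite \<Rightarrow> 's set"
  assumes fin: "\<And>p. finite (S p)" and ne: "\<And>p. S p \<noteq> {}"
    and valid: "\<And>t p s. 1 \<le> t \<Longrightarrow> t \<le> T \<Longrightarrow> s \<in> profiles S \<Longrightarrow> \<bar>u p s - U t p s\<bar> \<le> E t p s"
  shows "t \<le> T \<Longrightarrow> s \<in> profiles S \<Longrightarrow> (p, s) \<notin> fst (psreg_state S \<epsilon> g U E t) \<Longrightarrow>
     pruned_soundly S u \<epsilon> g (fst (snd (psreg_state S \<epsilon> g U E t)))
       (snd (snd (psreg_state S \<epsilon> g U E t))) p s"
proof (induction t arbitrary: p s)
  case 0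
  then show ?case by (simp add: indices_def)
next
  case (Suc t)
  obtain A uh eh where state: "psreg_state S \<epsilon> g U E t = (A, uh, eh)"
    by (metis prod_cases3)
  define uh' where "uh' = (\<lambda>p s. if (p, s) \<in> A then U (Suc t) p s else uh p s)"
  define eh' where "eh' = (\<lambda>p s. if (p, s) \<in> A then E (Suc t) p s else eh p s)"
  define pruned where "pruned = {(p, s) \<in> A. eh' p s \<le> \<epsilon> \<or>
                       reg_lb S uh' eh' p s > max 0 (g + \<epsilon> - eh' p s)}"
  have state': "psreg_state S \<epsilon> g U E (Suc t) = (A - pruned, uh', eh')"
    by (simp add: state uh'_def eh'_def pruned_def Let_def)
  have IH: "pruned_soundly S u \<epsilon> g uh eh q s'" if "s' \<in> profiles S" "(q, s') \<notin> A" for q s'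
    using Suc.IH[of s' q] Suc.prems(1) that state by simp
  have valid': "\<bar>u q s' - uh' q s'\<bar> \<le> eh' q s'" if "s' \<in> profiles S" for q s'
    using IH[OF that, of q] valid[of "Suc t" s' q] Suc.prems(1) that
    unfolding uh'_def eh'_def pruned_soundly_def by auto
  have "(p, s) \<notin> A \<or> (p, s) \<in> pruned"
    using Suc.prems(3) state' by auto
  then have "pruned_soundly S u \<epsilon> g uh' eh' p s"
  proof
    assume "(p, s) \<notin> A"
    then show ?thesis
      using IH[OF Suc.prems(2)] by (simp add: uh'_def eh'_def pruned_soundly_def)
  next
    assume "(p, s) \<in> pruned"
    moreover have "\<And>s'. s' \<in> dev S p s \<Longrightarrow> \<bar>u p s' - uh' p s'\<bar> \<le> eh' p s'"
      using valid' dev_subset_profiles[OF Suc.prems(2)] by blast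
    ultimately show ?thesis
      using regret_pruning_sound[OF fin ne _ Suc.prems(2)] valid'[OF Suc.prems(2)]
      unfolding pruned_def pruned_soundly_def by blast
  qed
  then show ?case
    using state' by simp
qed

lemma psreg_plus_pruned_soundly:
  fixes S :: "'p::finite \<Rightarrow> 's set"
  assumes fin: "\<And>p. finite (S p)" and ne: "\<And>p. S p \<noteq> {}"
    and valid: "\<And>t p s. 1 \<le> t \<Longrightarrow> t \<le> T \<Longrightarrow> s \<in> profiles S \<Longrightarrow> \<bar>u p s - U t p s\<bar> \<le> E t p s"
    and out: "psreg_plus S \<epsilon> g T U E = Some uh"
  obtains eh where "\<And>p s. s \<in> profiles S \<Longrightarrow> pruned_soundly S u \<epsilon> g uh eh p s"
proof -
  let ?active = "\<lambda>t. fst (psreg_state S \<epsilon> g U E t)"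
  define t0 where "t0 = (LEAST t. 1 \<le> t \<and> ?active t = {})"
  obtain t1 where t1: "1 \<le> t1" "t1 \<le> T" "?active t1 = {}"
    using out unfolding psreg_plus_def by (auto split: if_splits)
  have uh: "uh = fst (snd (psreg_state S \<epsilon> g U E t0))"
    using out unfolding psreg_plus_def t0_def by (auto split: if_splits)
  have "?active t0 = {}"
    unfolding t0_def by (rule LeastI2[of _ t1]) (use t1 in auto)
  moreover have "t0 \<le> T"
    using Least_le[of "\<lambda>t. 1 \<le> t \<and> ?active t = {}" t1] t1 unfolding t0_def by simp
  ultimately have "pruned_soundly S u \<epsilon> g uh (snd (snd (psreg_state S \<epsilon> g U E t0))) p s"
    if "s \<in> profiles S" for p s
    using psreg_state_pruned_soundly[where T = T and U = U and E = E, OF fin ne valid] that uh by simp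
  then show thesis
    using that by blast
qed

lemma eqs_subset_eqs_estimate:
  fixes S :: "'p::finite \<Rightarrow> 's set"
  assumes fin: "\<And>p. finite (S p)" and ne: "\<And>p. S p \<noteq> {}"
    and sound: "\<And>p s. s \<in> profiles S \<Longrightarrow> pruned_soundly S u \<epsilon> g uh eh p s"
    and "0 \<le> g" "0 \<le> \<epsilon>"
  shows "eqs S 0 u \<subseteq> eqs S (2 * \<epsilon>) uh"
proof
  fix s assume "s \<in> eqs S 0 u"
  then have s: "s \<in> profiles S" and nash: "\<And>p s'. s' \<in> dev S p s \<Longrightarrow> u p s' \<le> u p s"
    using mem_eqs_iff[of S, OF fin ne] by auto
  have "uh p s' - uh p s \<le> 2 * \<epsilon>" if s': "s' \<in> dev S p s" for p s'
  proof -
    have "best_dev_utility S u p s \<in> u p ` dev S p s"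
      using fin ne by (rule best_dev_utility_attained)
    then obtain sm where "sm \<in> dev S p s" "best_dev_utility S u p s = u p sm"
      by (metis imageE)
    moreover have "u p s \<le> best_dev_utility S u p s"
      by (rule best_dev_utility_ge[OF fin dev_self[OF s]])
    ultimately have best: "best_dev_utility S u p s = u p s"
      using nash by force
    then have "uh p s \<ge> u p s - \<epsilon>"
      using sound[OF s, of p] unfolding pruned_soundly_def by auto
    moreover have "uh p s' \<le> u p s + \<epsilon>"
      using sound[OF subsetD[OF dev_subset_profiles[OF s] s'], of p] nash[OF s'] assms(4,5)
        best best_dev_utility_dev[OF s'] unfolding pruned_soundly_def by auto
    ultimately show ?thesis by simp
  qed
  with s show "s \<in> eqs S (2 * \<epsilon>) uh"
    using mem_eqs_iff[of S, OF fin ne] by auto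
qed

lemma eqs_estimate_subset_eqs:
  fixes S :: "'p::finite \<Rightarrow> 's set"
  assumes fin: "\<And>p. finite (S p)" and ne: "\<And>p. S p \<noteq> {}"
    and sound: "\<And>p s. s \<in> profiles S \<Longrightarrow> pruned_soundly S u \<epsilon> g uh eh p s"
    and "0 \<le> \<gamma>" "\<gamma> \<le> g"
  shows "eqs S \<gamma> uh \<subseteq> eqs S (2 * \<epsilon> + \<gamma>) u"
proof
  fix s assume "s \<in> eqs S \<gamma> uh"
  then have s: "s \<in> profiles S" and approx: "\<And>p s'. s' \<in> dev S p s \<Longrightarrow> uh p s' - uh p s \<le> \<gamma>"
    using mem_eqs_iff[of S, OF fin ne] by auto
  have "u p s' - u p s \<le> 2 * \<epsilon> + \<gamma>" if s': "s' \<in> dev S p s" for p s'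
  proof -
    have "best_dev_utility S u p s \<in> u p ` dev S p s"
      using fin ne by (rule best_dev_utility_attained)
    then obtain sm where sm: "sm \<in> dev S p s" "u p sm = best_dev_utility S u p s"
      by (metis imageE)
    \<comment> \<open>a maximiser cannot have been pruned by regret\<close>
    have "uh p sm \<ge> u p sm - \<epsilon>"
      using sound[OF subsetD[OF dev_subset_profiles[OF s] sm(1)], of p] sm
        best_dev_utility_dev[OF sm(1)] unfolding pruned_soundly_def by auto
    moreover have "uh p s \<le> u p s + \<epsilon>"
      using sound[OF s, of p] calculation sm approx[OF sm(1)] assms(4,5)
      unfolding pruned_soundly_def by auto
    ultimately show ?thesis
      using best_dev_utility_ge[OF fin s', of u] sm approx[OF sm(1)] by linarith
  qed
  with s show "s \<in> eqs S (2 * \<epsilon> + \<gamma>) u"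
    using mem_eqs_iff[of S, OF fin ne] by auto
qed

lemma psreg_plus_equilibria:
  fixes S :: "'p::finite \<Rightarrow> 's set"
  assumes fin: "\<And>p. finite (S p)" and ne: "\<And>p. S p \<noteq> {}"
    and valid: "\<And>t p s. 1 \<le> t \<Longrightarrow> t \<le> T \<Longrightarrow> s \<in> profiles S \<Longrightarrow> \<bar>u p s - U t p s\<bar> \<le> E t p s"
    and out: "psreg_plus S \<epsilon> g T U E = Some uh"
    and "0 \<le> \<epsilon>" "0 \<le> g"
  shows "eqs S 0 u \<subseteq> eqs S (2 * \<epsilon>) uh \<and>
    (\<forall>\<gamma>. 0 \<le> \<gamma> \<and> \<gamma> \<le> g \<longrightarrow> eqs S \<gamma> uh \<subseteq> eqs S (2 * \<epsilon> + \<gamma>) u)"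
proof -
  obtain eh where sound: "\<And>p s. s \<in> profiles S \<Longrightarrow> pruned_soundly S u \<epsilon> g uh eh p s"
    using psreg_plus_pruned_soundly[OF fin ne valid out] by blast
  have "eqs S 0 u \<subseteq> eqs S (2 * \<epsilon>) uh"
    using assms(5,6) by (intro eqs_subset_eqs_estimate[OF fin ne sound])
  moreover have "eqs S \<gamma> uh \<subseteq> eqs S (2 * \<epsilon> + \<gamma>) u" if "0 \<le> \<gamma>" "\<gamma> \<le> g" for \<gamma>
    using that by (intro eqs_estimate_subset_eqs[OF fin ne sound])
  ultimately show ?thesis
    by blast
qed

lemma (in prob_space) union_bound_INT:
  assumes "finite I"
    and events: "\<And>i. i \<in> I \<Longrightarrow> G i \<in> events"
    and prob: "\<And>i. i \<in> I \<Longrightarrow> prob (G i) \<ge> 1 - \<delta> / real (card I)"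
    and "0 \<le> \<delta>"
  shows "space M \<inter> (\<Inter>i\<in>I. G i) \<in> events" "prob (space M \<inter> (\<Inter>i\<in>I. G i)) \<ge> 1 - \<delta>"
proof -
  have compl: "space M \<inter> (\<Inter>i\<in>I. G i) = space M - (\<Union>i\<in>I. space M - G i)"
    by blast
  have union_events: "(\<Union>i\<in>I. space M - G i) \<in> events"
    using assms(1) events by (intro sets.finite_UN sets.compl_sets) auto
  then show "space M \<inter> (\<Inter>i\<in>I. G i) \<in> events"
    unfolding compl by (intro sets.Diff sets.top)
  have "prob (\<Union>i\<in>I. space M - G i) \<le> (\<Sum>i\<in>I. prob (space M - G i))"
    using assms(1) events by (intro measure_UNION_le) auto
  also have "\<dots> \<le> (\<Sum>i\<in>I. \<delta> / real (card I))"
  proof (rule sum_mono)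
    fix i assume "i \<in> I"
    then show "prob (space M - G i) \<le> \<delta> / real (card I)"
      using events[of i] prob[of i] by (simp add: prob_compl)
  qed
  also have "\<dots> \<le> \<delta>"
    using assms(4) by (cases "I = {}") simp_all
  finally show "prob (space M \<inter> (\<Inter>i\<in>I. G i)) \<ge> 1 - \<delta>"
    unfolding compl using prob_compl[OF union_events] by simp
qed

theorem theorem7:
  fixes M :: "'o measure"
    and S :: "'p::finite \<Rightarrow> 's set"
    and u :: "'p \<Rightarrow> ('p \<Rightarrow> 's) \<Rightarrow> real"
    and X :: "nat \<Rightarrow> 'p \<Rightarrow> ('p \<Rightarrow> 's) \<Rightarrow> 'o \<Rightarrow> real"
    and Eb :: "nat \<Rightarrow> 'p \<Rightarrow> ('p \<Rightarrow> 's) \<Rightarrow> 'o \<Rightarrow> real"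
    and a b :: "('p \<Rightarrow> 's) \<Rightarrow> real"
    and m :: "nat \<Rightarrow> nat" and T :: nat
    and \<delta> \<epsilon> gstar :: real
  assumes "prob_space M"
    and "\<And>p. finite (S p)" and "\<And>p. S p \<noteq> {}"
    and "\<And>k p s. s \<in> profiles S \<Longrightarrow> X k p s \<in> borel_measurable M"
    and "\<And>k p s \<omega>. s \<in> profiles S \<Longrightarrow> \<omega> \<in> space M \<Longrightarrow> a s \<le> X k p s \<omega> \<and> X k p s \<omega> \<le> b s"
    and "\<And>k p s. s \<in> profiles S \<Longrightarrow> integral\<^sup>L M (X k p s) = u p s"
    and "\<And>t. 1 \<le> t \<Longrightarrow> t \<le> T \<Longrightarrow> m t > 0"
    and "0 < \<delta>" and "\<delta> < 1" and "0 < \<epsilon>" and "0 \<le> gstar"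
    and "\<And>t p s. 1 \<le> t \<Longrightarrow> t \<le> T \<Longrightarrow> s \<in> profiles S \<Longrightarrow>
           {\<omega> \<in> space M. \<bar>u p s - (\<Sum>k<Msched m t. X k p s \<omega>) / real (Msched m t)\<bar> \<le> Eb t p s \<omega>}
             \<in> sets M
         \<and> measure M {\<omega> \<in> space M. \<bar>u p s - (\<Sum>k<Msched m t. X k p s \<omega>) / real (Msched m t)\<bar>
                                      \<le> Eb t p s \<omega>}
             \<ge> 1 - \<delta> / (real (card (indices S)) * real T)"
  shows "\<exists>A\<in>sets M. measure M A \<ge> 1 - \<delta> \<and>
           (\<forall>\<omega>\<in>A. \<forall>uh.
              psreg_plus S \<epsilon> gstar T
                (\<lambda>t p s. (\<Sum>k<Msched m t. X k p s \<omega>) / real (Msched m t))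
                (\<lambda>t p s. Eb t p s \<omega>) = Some uh \<longrightarrow>
              eqs S 0 u \<subseteq> eqs S (2 * \<epsilon>) uh \<and>
              (\<forall>\<gamma>. 0 \<le> \<gamma> \<and> \<gamma> \<le> gstar \<longrightarrow> eqs S \<gamma> uh \<subseteq> eqs S (2 * \<epsilon> + \<gamma>) u))"
proof -
  interpret prob_space M by fact
  note fin = assms(2) and ne = assms(3)
  define U where "U \<omega> t p s = (\<Sum>k<Msched m t. X k p s \<omega>) / real (Msched m t)" for \<omega> t p s
  define valid where
    "valid = (\<lambda>(t, p, s). {\<omega> \<in> space M. \<bar>u p s - U \<omega> t p s\<bar> \<le> Eb t p s \<omega>})"
  define I where "I = {1..T} \<times> indices S"
  define A where "A = space M \<inter> (\<Inter>i\<in>I. valid i)"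
  have "finite (indices S)"
    unfolding indices_def profiles_def using fin by (simp add: finite_PiE)
  then have "finite I" "card I = card (indices S) * T"
    unfolding I_def by (simp_all add: card_cartesian_product)
  moreover have "valid i \<in> events \<and> prob (valid i) \<ge> 1 - \<delta> / real (card I)" if "i \<in> I" for i
    using that assms(12) \<open>card I = card (indices S) * T\<close>
    unfolding I_def indices_def valid_def U_def by auto
  ultimately have "A \<in> events" "prob A \<ge> 1 - \<delta>"
    unfolding A_def using union_bound_INT[of I valid \<delta>] assms(8) by auto
  moreover have "eqs S 0 u \<subseteq> eqs S (2 * \<epsilon>) uh \<and>
      (\<forall>\<gamma>. 0 \<le> \<gamma> \<and> \<gamma> \<le> gstar \<longrightarrow> eqs S \<gamma> uh \<subseteq> eqs S (2 * \<epsilon> + \<gamma>) u)"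
    if "\<omega> \<in> A" and out: "psreg_plus S \<epsilon> gstar T (U \<omega>) (\<lambda>t p s. Eb t p s \<omega>) = Some uh" for \<omega> uh
  proof -
    have "\<bar>u p s - U \<omega> t p s\<bar> \<le> Eb t p s \<omega>" if "1 \<le> t" "t \<le> T" "s \<in> profiles S" for t p s
      using \<open>\<omega> \<in> A\<close> that unfolding A_def I_def indices_def valid_def by auto
    then show ?thesis
      using psreg_plus_equilibria[OF fin ne _ out] assms(10,11) by simp
  qed
  ultimately show ?thesis
    unfolding U_def by blast
qed

end
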